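(* Let $\mathcal{C}$ be a simplicial complex on $[n]$. Then $\mathcal{C}$ is unimodular if and only if its Lawrence lifting $\Lambda(\mathcal{C})$ is unimodular.
   Context: A simplicial complex on $[n]$ is a family of subsets of $[n]$ closed under subsets; facets are inclusion-maximal faces. $\Lambda(\mathcal{C})$ is the simplicial complex on $[n+1]$ with facets $[n]$ and $F\cup\{n+1\}$ for each facet $F$ of $\mathcal{C}$. $\mathcal{A}_{\mathcal{C}}$ is the $0/1$ matrix with columns indexed by $\mathbf{i}\in\{1,2\}^n$ and rows indexed by pairs $(F,\mathbf{e})$, $F$ a facet, $\mathbf{e}\in\{1,2\}^F$; entry $1$ iff $\mathbf{e}=\mathbf{i}|_F$. An integer matrix is unimodular if every circuit (nonzero integer kernel vector with coprime entries and inclusion-minimal support) has entries in $\{0,\pm1\}$; a complex is unimodular if its matrix $\mathcal{A}$ is. *)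

theory Defs
  imports "HOL-Library.FuncSet"
begin

definition simplicial_complex :: "nat \<Rightarrow> nat set set \<Rightarrow> bool" where
  "simplicial_complex n C \<longleftrightarrow>
     C \<subseteq> Pow {1..n} \<and> (\<forall>F\<in>C. \<forall>G. G \<subseteq> F \<longrightarrow> G \<in> C)"

definition facets :: "nat set set \<Rightarrow> nat set set" where
  "facets C = {F \<in> C. \<forall>G\<in>C. F \<subseteq> G \<longrightarrow> G = F}"

definition lawrence :: "nat \<Rightarrow> nat set set \<Rightarrow> nat set set" where
  "lawrence n C = {G. G \<subseteq> {1..n}} \<union> {G. \<exists>F\<in>facets C. G \<subseteq> insert (n+1) F}"

definition in_kernel :: "'r set \<Rightarrow> 'c set \<Rightarrow> ('r \<Rightarrow> 'c \<Rightarrow> int) \<Rightarrow> ('c \<Rightarrow> int) \<Rightarrow> bool" where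
  "in_kernel R I M u \<longleftrightarrow> (\<forall>i. i \<notin> I \<longrightarrow> u i = 0) \<and> (\<forall>r\<in>R. (\<Sum>i\<in>I. M r i * u i) = 0)"

definition supp :: "('c \<Rightarrow> int) \<Rightarrow> 'c set" where
  "supp u = {i. u i \<noteq> 0}"

definition is_circuit :: "'r set \<Rightarrow> 'c set \<Rightarrow> ('r \<Rightarrow> 'c \<Rightarrow> int) \<Rightarrow> ('c \<Rightarrow> int) \<Rightarrow> bool" where
  "is_circuit R I M u \<longleftrightarrow>
     in_kernel R I M u \<and> supp u \<noteq> {} \<and> Gcd (u ` I) = 1 \<and>
     (\<forall>v. in_kernel R I M v \<and> supp v \<noteq> {} \<and> supp v \<subseteq> supp u \<longrightarrow> supp v = supp u)"

definition unimodular_matrix :: "'r set \<Rightarrow> 'c set \<Rightarrow> ('r \<Rightarrow> 'c \<Rightarrow> int) \<Rightarrow> bool" where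
  "unimodular_matrix R I M \<longleftrightarrow> (\<forall>u. is_circuit R I M u \<longrightarrow> (\<forall>i. u i \<in> {-1, 0, 1}))"

definition A_cols :: "nat \<Rightarrow> (nat \<Rightarrow> nat) set" where
  "A_cols n = PiE {1..n} (\<lambda>_. {1, 2})"

definition A_rows :: "nat set set \<Rightarrow> (nat set \<times> (nat \<Rightarrow> nat)) set" where
  "A_rows C = {(F, e). F \<in> facets C \<and> e \<in> PiE F (\<lambda>_. {1, 2})}"

definition A_entry :: "nat set \<times> (nat \<Rightarrow> nat) \<Rightarrow> (nat \<Rightarrow> nat) \<Rightarrow> int" where
  "A_entry r i = (if snd r = restrict i (fst r) then 1 else 0)"

definition unimodular_complex :: "nat \<Rightarrow> nat set set \<Rightarrow> bool" where
  "unimodular_complex n C \<longleftrightarrow> unimodular_matrix (A_rows C) (A_cols n) A_entry"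

end

theory Submission
  imports Defs
begin

text \<open>
  A column of the Lawrence matrix is a pair (i, j) with i \<in> {1,2}^n and j \<in> {1,2}, encoded as
  the function i(n+1 := j). The row of the facet [n] forces a kernel vector to take opposite
  values on (i, 1) and (i, 2), and the rows F \<union> {n+1} then reduce to the rows F of A_C.
  So u \<mapsto> (u, -u) is a bijection from the kernel of A_C onto that of the Lawrence matrix which
  preserves inclusion of supports, the gcd of the entries and whether all entries lie in
  {0, \<plusminus>1}; hence circuits correspond to circuits. The listed facets of \<Lambda>(C) need not all be
  facets ([n] is not one when [n] \<in> C), but vanishing of marginals only depends on the
  down-closure of the sets involved.
\<close>

section \<open>Matrices with corresponding kernels\<close>

lemma in_kernel_zero: "in_kernel R I M (\<lambda>_. 0)"
  by (simp add: in_kernel_def)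

lemma in_kernel_vanishes: "in_kernel R I M u \<Longrightarrow> \<forall>i. i \<notin> I \<longrightarrow> u i = 0"
  by (simp add: in_kernel_def)

lemma Gcd_eq_if_same_common_divisors:
  fixes A B :: "'a::semiring_Gcd set"
  assumes "\<And>d. (\<forall>x\<in>A. d dvd x) \<longleftrightarrow> (\<forall>x\<in>B. d dvd x)"
  shows "Gcd A = Gcd B"
proof (rule associated_eqI)
  show "Gcd A dvd Gcd B" "Gcd B dvd Gcd A"
    using assms[of "Gcd A"] assms[of "Gcd B"] by (auto simp: dvd_Gcd_iff[symmetric])
qed simp_all

locale kernel_correspondence =
  fixes R :: "'r set" and I :: "'c set" and M :: "'r \<Rightarrow> 'c \<Rightarrow> int"
    and R' :: "'r' set" and I' :: "'c' set" and M' :: "'r' \<Rightarrow> 'c' \<Rightarrow> int"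
    and L :: "('c \<Rightarrow> int) \<Rightarrow> 'c' \<Rightarrow> int"
  assumes in_kernel_map: "in_kernel R I M u \<Longrightarrow> in_kernel R' I' M' (L u)"
    and in_kernel_map_surj: "in_kernel R' I' M' v \<Longrightarrow> \<exists>u. in_kernel R I M u \<and> v = L u"
    and map_zero: "L (\<lambda>_. 0) = (\<lambda>_. 0)"
    and supp_map_subset_iff:
      "in_kernel R I M u \<Longrightarrow> in_kernel R I M w \<Longrightarrow> supp (L u) \<subseteq> supp (L w) \<longleftrightarrow> supp u \<subseteq> supp w"
    and Gcd_map: "in_kernel R I M u \<Longrightarrow> Gcd (L u ` I') = Gcd (u ` I)"
    and unit_entries_map:
      "in_kernel R I M u \<Longrightarrow> (\<forall>i. L u i \<in> {-1, 0, 1}) \<longleftrightarrow> (\<forall>i. u i \<in> {-1, 0, 1})"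
begin

lemma supp_map_empty_iff:
  assumes "in_kernel R I M u"
  shows "supp (L u) = {} \<longleftrightarrow> supp u = {}"
  using supp_map_subset_iff[OF assms in_kernel_zero] by (simp add: map_zero supp_def)

lemma is_circuit_map_iff:
  assumes u: "in_kernel R I M u"
  shows "is_circuit R' I' M' (L u) \<longleftrightarrow> is_circuit R I M u"
proof -
  have "(\<forall>v. in_kernel R' I' M' v \<and> supp v \<noteq> {} \<and> supp v \<subseteq> supp (L u) \<longrightarrow> supp v = supp (L u))
    \<longleftrightarrow> (\<forall>w. in_kernel R I M w \<and> supp w \<noteq> {} \<and> supp w \<subseteq> supp u \<longrightarrow> supp w = supp u)"
    (is "?minimal' \<longleftrightarrow> ?minimal")
  proof
    assume ?minimal'
    show ?minimal
    proof (intro allI impI, elim conjE)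
      fix w
      assume w: "in_kernel R I M w" "supp w \<noteq> {}" "supp w \<subseteq> supp u"
      with \<open>?minimal'\<close> have "supp (L w) = supp (L u)"
        using in_kernel_map[OF w(1)] supp_map_empty_iff[OF w(1)] supp_map_subset_iff[OF w(1) u]
        by blast
      then show "supp w = supp u"
        using supp_map_subset_iff[OF w(1) u] supp_map_subset_iff[OF u w(1)] by blast
    qed
  next
    assume ?minimal
    show ?minimal'
    proof (intro allI impI, elim conjE)
      fix v
      assume v: "in_kernel R' I' M' v" "supp v \<noteq> {}" "supp v \<subseteq> supp (L u)"
      obtain w where w: "in_kernel R I M w" "v = L w"
        using in_kernel_map_surj[OF v(1)] by blast
      have "supp w = supp u"
        using \<open>?minimal\<close> w(1) v(2,3) supp_map_empty_iff[OF w(1)] supp_map_subset_iff[OF w(1) u]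
        unfolding w(2) by blast
      then show "supp v = supp (L u)"
        using supp_map_subset_iff[OF w(1) u] supp_map_subset_iff[OF u w(1)] unfolding w(2) by blast
    qed
  qed
  then show ?thesis
    unfolding is_circuit_def using u in_kernel_map supp_map_empty_iff Gcd_map by auto
qed

lemma unimodular_matrix_iff: "unimodular_matrix R' I' M' \<longleftrightarrow> unimodular_matrix R I M"
  unfolding unimodular_matrix_def
proof (intro iffI allI impI)
  fix u i
  assume unimodular': "\<forall>v. is_circuit R' I' M' v \<longrightarrow> (\<forall>i. v i \<in> {-1, 0, 1})"
    and u: "is_circuit R I M u"
  then have "in_kernel R I M u"
    by (simp add: is_circuit_def)
  then show "u i \<in> {-1, 0, 1}"
    using unimodular' u is_circuit_map_iff unit_entries_map by blast
next
  fix v i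
  assume unimodular: "\<forall>u. is_circuit R I M u \<longrightarrow> (\<forall>i. u i \<in> {-1, 0, 1})"
    and v: "is_circuit R' I' M' v"
  then obtain u where "in_kernel R I M u" "v = L u"
    using in_kernel_map_surj unfolding is_circuit_def by blast
  then show "v i \<in> {-1, 0, 1}"
    using unimodular v is_circuit_map_iff unit_entries_map by blast
qed

end

section \<open>Marginals\<close>

abbreviation cube :: "nat set \<Rightarrow> (nat \<Rightarrow> nat) set" where
  "cube D \<equiv> PiE D (\<lambda>_. {1, 2})"

definition marginal :: "nat set \<Rightarrow> nat set \<Rightarrow> ((nat \<Rightarrow> nat) \<Rightarrow> int) \<Rightarrow> (nat \<Rightarrow> nat) \<Rightarrow> int" where
  "marginal D F u e = (\<Sum>i\<in>{i \<in> cube D. restrict i F = e}. u i)"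

definition marginals_vanish :: "nat set \<Rightarrow> nat set set \<Rightarrow> ((nat \<Rightarrow> nat) \<Rightarrow> int) \<Rightarrow> bool" where
  "marginals_vanish D S u \<longleftrightarrow>
     (\<forall>i. i \<notin> cube D \<longrightarrow> u i = 0) \<and> (\<forall>F\<in>S. \<forall>e\<in>cube F. marginal D F u e = 0)"

lemma in_kernel_A_iff:
  "in_kernel (A_rows C) (A_cols n) A_entry u \<longleftrightarrow> marginals_vanish {1..n} (facets C) u"
proof -
  have "(\<Sum>i\<in>A_cols n. A_entry (F, e) i * u i) = marginal {1..n} F u e" for F e
  proof -
    have "(\<Sum>i\<in>A_cols n. A_entry (F, e) i * u i) = (\<Sum>i\<in>A_cols n. if restrict i F = e then u i else 0)"
      by (rule sum.cong) (auto simp: A_entry_def)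
    also have "\<dots> = marginal {1..n} F u e"
      by (simp add: sum.inter_filter finite_PiE A_cols_def marginal_def)
    finally show ?thesis .
  qed
  then show ?thesis
    unfolding in_kernel_def marginals_vanish_def A_rows_def by (auto simp: A_cols_def)
qed

lemma marginal_refine:
  assumes "finite D" "G \<subseteq> F" "F \<subseteq> D"
  shows "marginal D G u e = (\<Sum>e'\<in>{e' \<in> cube F. restrict e' G = e}. marginal D F u e')"
proof -
  let ?S = "{i \<in> cube D. restrict i G = e}" and ?T = "{e' \<in> cube F. restrict e' G = e}"
  have "finite F"
    using assms(1,3) finite_subset by blast
  then have "finite ?S" "finite ?T"
    using assms(1) by (simp_all add: finite_PiE)
  moreover have "(\<lambda>i. restrict i F) ` ?S \<subseteq> ?T"
    using assms(2,3) by (auto simp: PiE_iff Int_absorb1 Int_absorb2)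
  ultimately have "(\<Sum>i\<in>?S. u i) = (\<Sum>e'\<in>?T. \<Sum>i\<in>{i \<in> ?S. restrict i F = e'}. u i)"
    by (rule sum.group[symmetric])
  also have "\<dots> = (\<Sum>e'\<in>?T. marginal D F u e')"
  proof (rule sum.cong[OF refl])
    fix e' assume "e' \<in> ?T"
    then have "{i \<in> ?S. restrict i F = e'} = {i \<in> cube D. restrict i F = e'}"
      using assms(2) by (auto simp: Int_absorb1)
    then show "(\<Sum>i\<in>{i \<in> ?S. restrict i F = e'}. u i) = marginal D F u e'"
      by (simp add: marginal_def)
  qed
  finally show ?thesis
    by (simp add: marginal_def)
qed

lemma marginals_vanish_mono:
  assumes "finite D" "\<forall>F\<in>S. F \<subseteq> D" "\<forall>G\<in>S'. \<exists>F\<in>S. G \<subseteq> F" "marginals_vanish D S u"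
  shows "marginals_vanish D S' u"
  unfolding marginals_vanish_def
proof (intro conjI ballI)
  show "\<forall>i. i \<notin> cube D \<longrightarrow> u i = 0"
    using assms(4) by (simp add: marginals_vanish_def)
next
  fix G e assume "G \<in> S'" "e \<in> cube G"
  then obtain F where F: "F \<in> S" "G \<subseteq> F"
    using assms(3) by blast
  then have "marginal D G u e = (\<Sum>e'\<in>{e' \<in> cube F. restrict e' G = e}. marginal D F u e')"
    using marginal_refine assms(1,2) by blast
  also have "\<dots> = 0"
    using assms(4) F(1) by (intro sum.neutral) (auto simp: marginals_vanish_def)
  finally show "marginal D G u e = 0" .
qed

section \<open>The Lawrence lifting\<close>

lemma facet_subset_ground: "simplicial_complex n C \<Longrightarrow> F \<in> facets C \<Longrightarrow> F \<subseteq> {1..n}"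
  unfolding simplicial_complex_def facets_def by auto

lemma finite_facet_superset:
  assumes "finite S" "G \<in> S"
  shows "\<exists>F\<in>facets S. G \<subseteq> F"
proof -
  obtain F where F: "F \<in> S" "G \<subseteq> F" and maximal: "\<forall>F'\<in>S. F \<subseteq> F' \<longrightarrow> F = F'"
    using finite_has_maximal2[OF assms] by blast
  have "F \<in> facets S"
    using F(1) maximal unfolding facets_def by auto
  with F(2) show ?thesis
    by blast
qed

definition lawrence_generators :: "nat \<Rightarrow> nat set set \<Rightarrow> nat set set" where
  "lawrence_generators n C = insert {1..n} (insert (n + 1) ` facets C)"

lemma lawrence_eq_down_closure: "lawrence n C = {G. \<exists>F\<in>lawrence_generators n C. G \<subseteq> F}"
  unfolding lawrence_def lawrence_generators_def by auto

lemma marginals_vanish_lawrence_iff: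
  assumes "simplicial_complex n C"
  shows "marginals_vanish {1..n + 1} (facets (lawrence n C)) v
    \<longleftrightarrow> marginals_vanish {1..n + 1} (lawrence_generators n C) v"
proof -
  have generators_ground: "\<forall>G\<in>lawrence_generators n C. G \<subseteq> {1..n + 1}"
    using facet_subset_ground[OF assms] by (force simp: lawrence_generators_def)
  then have lawrence_ground: "lawrence n C \<subseteq> Pow {1..n + 1}"
    unfolding lawrence_eq_down_closure by blast
  then have "finite (lawrence n C)"
    by (rule finite_subset) simp
  then have "\<forall>G\<in>lawrence_generators n C. \<exists>F\<in>facets (lawrence n C). G \<subseteq> F"
    using finite_facet_superset unfolding lawrence_eq_down_closure by blast
  moreover have "\<forall>G\<in>facets (lawrence n C). \<exists>F\<in>lawrence_generators n C. G \<subseteq> F"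
    unfolding facets_def lawrence_eq_down_closure by blast
  moreover have facets_ground: "\<forall>F\<in>facets (lawrence n C). F \<subseteq> {1..n + 1}"
    using lawrence_ground by (auto simp: facets_def)
  ultimately show ?thesis
    using marginals_vanish_mono[OF _ generators_ground] marginals_vanish_mono[OF _ facets_ground]
    by auto
qed

lemma A_cols_extend: "i \<in> A_cols n \<Longrightarrow> j \<in> {1, 2} \<Longrightarrow> i(n + 1 := j) \<in> A_cols (n + 1)"
  unfolding A_cols_def by (auto simp: PiE_iff extensional_def)

lemma A_cols_restrict: "i \<in> A_cols (n + 1) \<Longrightarrow> restrict i {1..n} \<in> A_cols n"
  unfolding A_cols_def by (auto simp: PiE_iff)

lemma A_cols_last: "i \<in> A_cols (n + 1) \<Longrightarrow> i (n + 1) \<in> {1, 2}"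
  unfolding A_cols_def by (auto simp: PiE_iff)

lemma extend_restrict_A_cols: "i \<in> A_cols (n + 1) \<Longrightarrow> (restrict i {1..n})(n + 1 := i (n + 1)) = i"
  unfolding A_cols_def by (rule ext) (auto simp: PiE_iff extensional_def)

lemma restrict_extend_A_cols: "i \<in> A_cols n \<Longrightarrow> restrict (i(n + 1 := j)) {1..n} = i"
  unfolding A_cols_def by (rule ext) (auto simp: PiE_iff extensional_def)

lemma marginal_A_cols: "marginal {1..n} F u e = (\<Sum>i\<in>{i \<in> A_cols n. restrict i F = e}. u i)"
  by (simp add: marginal_def A_cols_def)

lemma extend_fiber_A_cols:
  assumes F: "F \<subseteq> {1..n}" and e: "e \<in> extensional F" and j: "j \<in> {1, 2}"
  shows "(\<lambda>i. i(n + 1 := j)) ` {i \<in> A_cols n. restrict i F = e}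
    = {i' \<in> A_cols (n + 1). restrict i' (insert (n + 1) F) = e(n + 1 := j)}"
proof (intro equalityI subsetI)
  have "n + 1 \<notin> F"
    using F by auto
  fix i' assume "i' \<in> (\<lambda>i. i(n + 1 := j)) ` {i \<in> A_cols n. restrict i F = e}"
  then obtain i where i: "i \<in> A_cols n" "restrict i F = e" "i' = i(n + 1 := j)"
    by blast
  have "restrict i' (insert (n + 1) F) = e(n + 1 := j)"
  proof (rule ext)
    fix x show "restrict i' (insert (n + 1) F) x = (e(n + 1 := j)) x"
      using i(2,3) e \<open>n + 1 \<notin> F\<close> by (cases "x = n + 1") (auto simp: restrict_def extensional_def)
  qed
  with A_cols_extend[OF i(1) j] i(3)
  show "i' \<in> {i' \<in> A_cols (n + 1). restrict i' (insert (n + 1) F) = e(n + 1 := j)}"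
    by simp
next
  have "n + 1 \<notin> F"
    using F by auto
  fix i' assume "i' \<in> {i' \<in> A_cols (n + 1). restrict i' (insert (n + 1) F) = e(n + 1 := j)}"
  then have i': "i' \<in> A_cols (n + 1)" "restrict i' (insert (n + 1) F) = e(n + 1 := j)"
    by auto
  then have "i' (n + 1) = j"
    by (metis fun_upd_same insertI1 restrict_apply')
  moreover have "restrict (restrict i' {1..n}) F = e"
  proof (rule ext)
    fix x show "restrict (restrict i' {1..n}) F x = e x"
      using fun_cong[OF i'(2), of x] e F \<open>n + 1 \<notin> F\<close>
      by (cases "x \<in> F") (auto simp: extensional_def)
  qed
  ultimately show "i' \<in> (\<lambda>i. i(n + 1 := j)) ` {i \<in> A_cols n. restrict i F = e}"
    using extend_restrict_A_cols[OF i'(1)] A_cols_restrict[OF i'(1)]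
    by (metis (mono_tags) image_eqI mem_Collect_eq)
qed

lemma marginal_insert_last:
  assumes F: "F \<subseteq> {1..n}" and e: "e \<in> extensional F" and j: "j \<in> {1, 2}"
  shows "marginal {1..n + 1} (insert (n + 1) F) w (e(n + 1 := j))
    = marginal {1..n} F (\<lambda>i. w (i(n + 1 := j))) e"
proof -
  have "inj_on (\<lambda>i. i(n + 1 := j)) {i \<in> A_cols n. restrict i F = e}"
    by (rule inj_onI) (metis (no_types, lifting) mem_Collect_eq restrict_extend_A_cols)
  then show ?thesis
    unfolding marginal_A_cols extend_fiber_A_cols[OF assms, symmetric] by (simp add: sum.reindex)
qed

lemma marginal_ground_last:
  assumes e: "e \<in> A_cols n"
  shows "marginal {1..n + 1} {1..n} w e = w (e(n + 1 := 1)) + w (e(n + 1 := 2))"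
proof -
  have "{i \<in> A_cols (n + 1). restrict i {1..n} = e} = {e(n + 1 := 1), e(n + 1 := 2)}"
  proof (intro equalityI subsetI)
    fix i assume "i \<in> {i \<in> A_cols (n + 1). restrict i {1..n} = e}"
    then have "i \<in> A_cols (n + 1)" "i = e(n + 1 := i (n + 1))"
      using extend_restrict_A_cols by auto
    then show "i \<in> {e(n + 1 := 1), e(n + 1 := 2)}"
      using A_cols_last by (metis insert_iff singletonD)
  qed (use A_cols_extend[OF e] restrict_extend_A_cols[OF e] in auto)
  moreover have "e(n + 1 := 1) \<noteq> e(n + 1 := 2)"
    by (metis fun_upd_same numeral_One numeral_eq_iff semiring_norm(85))
  ultimately show ?thesis
    unfolding marginal_A_cols by simp
qed

definition lawrence_lift :: "nat \<Rightarrow> ((nat \<Rightarrow> nat) \<Rightarrow> int) \<Rightarrow> (nat \<Rightarrow> nat) \<Rightarrow> int" where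
  "lawrence_lift n u i =
     (if i \<in> A_cols (n + 1) then (if i (n + 1) = 1 then 1 else -1) * u (restrict i {1..n}) else 0)"

lemma lawrence_lift_zero: "lawrence_lift n (\<lambda>_. 0) = (\<lambda>_. 0)"
  by (simp add: lawrence_lift_def fun_eq_iff)

lemma lawrence_lift_extend:
  "i \<in> A_cols n \<Longrightarrow> j \<in> {1, 2} \<Longrightarrow> lawrence_lift n u (i(n + 1 := j)) = (if j = 1 then 1 else -1) * u i"
  unfolding lawrence_lift_def using A_cols_extend restrict_extend_A_cols by auto

lemma marginal_lawrence_lift_insert_last:
  assumes F: "F \<subseteq> {1..n}" and e: "e \<in> cube F" and j: "j \<in> {1, 2}"
  shows "marginal {1..n + 1} (insert (n + 1) F) (lawrence_lift n u) (e(n + 1 := j))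
    = (if j = 1 then 1 else -1) * marginal {1..n} F u e"
proof -
  have "marginal {1..n + 1} (insert (n + 1) F) (lawrence_lift n u) (e(n + 1 := j))
      = marginal {1..n} F (\<lambda>i. lawrence_lift n u (i(n + 1 := j))) e"
    using marginal_insert_last[OF F PiE_iff[THEN iffD1, OF e, THEN conjunct2] j] .
  also have "\<dots> = (\<Sum>i\<in>{i \<in> A_cols n. restrict i F = e}. (if j = 1 then 1 else -1) * u i)"
    unfolding marginal_A_cols by (rule sum.cong[OF refl]) (use lawrence_lift_extend[OF _ j] in blast)
  also have "\<dots> = (if j = 1 then 1 else -1) * marginal {1..n} F u e"
    unfolding marginal_A_cols by (rule sum_distrib_left[symmetric])
  finally show ?thesis .
qed

lemma marginal_lawrence_lift_ground:
  assumes "e \<in> A_cols n"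
  shows "marginal {1..n + 1} {1..n} (lawrence_lift n u) e = 0"
  using marginal_ground_last[OF assms] lawrence_lift_extend[OF assms] by simp

lemma marginals_vanish_lawrence_lift:
  assumes C: "simplicial_complex n C" and u: "marginals_vanish {1..n} (facets C) u"
  shows "marginals_vanish {1..n + 1} (lawrence_generators n C) (lawrence_lift n u)"
  unfolding marginals_vanish_def lawrence_generators_def
proof (intro conjI allI impI ballI)
  fix i assume "i \<notin> cube {1..n + 1}"
  then show "lawrence_lift n u i = 0"
    by (simp add: lawrence_lift_def A_cols_def)
next
  fix G e assume "G \<in> insert {1..n} (insert (n + 1) ` facets C)" "e \<in> cube G"
  then consider "G = {1..n}" | F where "F \<in> facets C" "G = insert (n + 1) F"
    by blast
  then show "marginal {1..n + 1} G (lawrence_lift n u) e = 0"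
  proof cases
    case 1
    with \<open>e \<in> cube G\<close> show ?thesis
      using marginal_lawrence_lift_ground by (simp add: A_cols_def)
  next
    case 2
    have F: "F \<subseteq> {1..n}"
      using facet_subset_ground[OF C 2(1)] .
    define e' j where "e' = restrict e F" and "j = e (n + 1)"
    have "e' \<in> cube F" "j \<in> {1, 2}" "e = e'(n + 1 := j)"
      using \<open>e \<in> cube G\<close> F unfolding 2(2) e'_def j_def by (auto simp: PiE_iff extensional_def fun_eq_iff)
    then show ?thesis
      using marginal_lawrence_lift_insert_last[OF F] u 2 by (simp add: marginals_vanish_def)
  qed
qed

lemma marginals_vanish_of_lawrence_lift:
  assumes C: "simplicial_complex n C" and u: "\<forall>i. i \<notin> A_cols n \<longrightarrow> u i = 0"
    and lifted: "marginals_vanish {1..n + 1} (lawrence_generators n C) (lawrence_lift n u)"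
  shows "marginals_vanish {1..n} (facets C) u"
  unfolding marginals_vanish_def
proof (intro conjI allI impI ballI)
  fix i assume "i \<notin> cube {1..n}"
  then show "u i = 0"
    using u by (simp add: A_cols_def)
next
  fix F e assume F: "F \<in> facets C" and e: "e \<in> cube F"
  then have "e(n + 1 := 1) \<in> cube (insert (n + 1) F)"
    by (auto simp: PiE_iff extensional_def)
  with lifted F have "marginal {1..n + 1} (insert (n + 1) F) (lawrence_lift n u) (e(n + 1 := 1)) = 0"
    by (auto simp: marginals_vanish_def lawrence_generators_def)
  then show "marginal {1..n} F u e = 0"
    using marginal_lawrence_lift_insert_last[OF facet_subset_ground[OF C F] e] by simp
qed

lemma lawrence_lift_surj:
  assumes "\<forall>i. i \<notin> A_cols (n + 1) \<longrightarrow> v i = 0"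
    and "\<forall>e\<in>A_cols n. marginal {1..n + 1} {1..n} v e = 0"
  shows "\<exists>u. (\<forall>i. i \<notin> A_cols n \<longrightarrow> u i = 0) \<and> v = lawrence_lift n u"
proof (intro exI conjI)
  define u where "u i = (if i \<in> A_cols n then v (i(n + 1 := 1)) else 0)" for i
  show "\<forall>i. i \<notin> A_cols n \<longrightarrow> u i = 0"
    by (simp add: u_def)
  show "v = lawrence_lift n u"
  proof
    fix i
    show "v i = lawrence_lift n u i"
    proof (cases "i \<in> A_cols (n + 1)")
      case False
      then show ?thesis
        using assms(1) by (simp add: lawrence_lift_def)
    next
      case True
      define e j where "e = restrict i {1..n}" and "j = i (n + 1)"
      have e: "e \<in> A_cols n" and j: "j \<in> {1, 2}" and i: "i = e(n + 1 := j)"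
        using A_cols_restrict[OF True] A_cols_last[OF True] extend_restrict_A_cols[OF True]
        unfolding e_def j_def by simp_all
      have "v (e(n + 1 := 1)) + v (e(n + 1 := 2)) = 0"
        using marginal_ground_last[OF e, of v] assms(2) e by metis
      then show ?thesis
        using j lawrence_lift_extend[OF e j] unfolding i by (auto simp: u_def e)
    qed
  qed
qed

lemma supp_lawrence_lift_subset_iff:
  assumes u: "\<forall>i. i \<notin> A_cols n \<longrightarrow> u i = 0" and w: "\<forall>i. i \<notin> A_cols n \<longrightarrow> w i = 0"
  shows "supp (lawrence_lift n u) \<subseteq> supp (lawrence_lift n w) \<longleftrightarrow> supp u \<subseteq> supp w"
proof
  assume lifted: "supp (lawrence_lift n u) \<subseteq> supp (lawrence_lift n w)"
  show "supp u \<subseteq> supp w"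
  proof
    fix i assume "i \<in> supp u"
    then have "i \<in> A_cols n"
      using u by (auto simp: supp_def)
    then have "i(n + 1 := 1) \<in> supp (lawrence_lift n u)"
      using \<open>i \<in> supp u\<close> lawrence_lift_extend[of i n 1 u] by (simp add: supp_def)
    with lifted show "i \<in> supp w"
      using lawrence_lift_extend[OF \<open>i \<in> A_cols n\<close>, of 1 w] by (auto simp: supp_def)
  qed
next
  assume "supp u \<subseteq> supp w"
  then show "supp (lawrence_lift n u) \<subseteq> supp (lawrence_lift n w)"
    by (auto simp: supp_def lawrence_lift_def)
qed

lemma Gcd_lawrence_lift:
  assumes "\<forall>i. i \<notin> A_cols n \<longrightarrow> u i = 0"
  shows "Gcd (lawrence_lift n u ` A_cols (n + 1)) = Gcd (u ` A_cols n)"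
proof (rule Gcd_eq_if_same_common_divisors)
  fix d :: int
  show "(\<forall>x\<in>lawrence_lift n u ` A_cols (n + 1). d dvd x) \<longleftrightarrow> (\<forall>x\<in>u ` A_cols n. d dvd x)"
  proof
    assume lifted: "\<forall>x\<in>lawrence_lift n u ` A_cols (n + 1). d dvd x"
    show "\<forall>x\<in>u ` A_cols n. d dvd x"
    proof
      fix x assume "x \<in> u ` A_cols n"
      then obtain i where i: "i \<in> A_cols n" "x = u i"
        by blast
      then have "x = lawrence_lift n u (i(n + 1 := 1))"
        using lawrence_lift_extend[OF i(1), of 1 u] by simp
      with A_cols_extend[OF i(1), of 1] lifted show "d dvd x"
        by blast
    qed
  next
    assume original: "\<forall>x\<in>u ` A_cols n. d dvd x"
    show "\<forall>x\<in>lawrence_lift n u ` A_cols (n + 1). d dvd x"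
    proof
      fix x assume "x \<in> lawrence_lift n u ` A_cols (n + 1)"
      then obtain i where i: "i \<in> A_cols (n + 1)" "x = lawrence_lift n u i"
        by blast
      have "d dvd u (restrict i {1..n})"
        using original A_cols_restrict[OF i(1)] by blast
      then show "d dvd x"
        using i by (simp add: lawrence_lift_def)
    qed
  qed
qed

lemma unit_entries_lawrence_lift:
  assumes "\<forall>i. i \<notin> A_cols n \<longrightarrow> u i = 0"
  shows "(\<forall>i. lawrence_lift n u i \<in> {-1, 0, 1}) \<longleftrightarrow> (\<forall>i. u i \<in> {-1, 0, 1})"
proof (intro iffI allI)
  fix i
  assume lifted: "\<forall>i. lawrence_lift n u i \<in> {-1, 0, 1}"
  show "u i \<in> {-1, 0, 1}"
  proof (cases "i \<in> A_cols n")
    case True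
    have "lawrence_lift n u (i(n + 1 := 1)) \<in> {-1, 0, 1}"
      using lifted by blast
    then show ?thesis
      using lawrence_lift_extend[OF True, of 1 u] by simp
  qed (use assms in simp)
next
  fix i
  assume "\<forall>i. u i \<in> {-1, 0, 1}"
  then have "u (restrict i {1..n}) \<in> {-1, 0, 1}"
    by blast
  then show "lawrence_lift n u i \<in> {-1, 0, 1}"
    by (auto simp: lawrence_lift_def)
qed

lemma lawrence_kernel_correspondence:
  assumes C: "simplicial_complex n C"
  shows "kernel_correspondence (A_rows C) (A_cols n) A_entry
    (A_rows (lawrence n C)) (A_cols (n + 1)) A_entry (lawrence_lift n)"
proof
  fix u
  assume "in_kernel (A_rows C) (A_cols n) A_entry u"
  then have "marginals_vanish {1..n + 1} (lawrence_generators n C) (lawrence_lift n u)"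
    using marginals_vanish_lawrence_lift[OF C] in_kernel_A_iff by blast
  then show "in_kernel (A_rows (lawrence n C)) (A_cols (n + 1)) A_entry (lawrence_lift n u)"
    unfolding in_kernel_A_iff marginals_vanish_lawrence_iff[OF C] .
next
  fix v
  assume "in_kernel (A_rows (lawrence n C)) (A_cols (n + 1)) A_entry v"
  then have v: "marginals_vanish {1..n + 1} (lawrence_generators n C) v"
    using marginals_vanish_lawrence_iff[OF C] by (simp add: in_kernel_A_iff)
  then obtain u where u: "\<forall>i. i \<notin> A_cols n \<longrightarrow> u i = 0" and "v = lawrence_lift n u"
    using lawrence_lift_surj
    unfolding marginals_vanish_def lawrence_generators_def A_cols_def by (metis insertI1)
  with v have "in_kernel (A_rows C) (A_cols n) A_entry u"
    using marginals_vanish_of_lawrence_lift[OF C u] by (simp add: in_kernel_A_iff)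
  with \<open>v = lawrence_lift n u\<close> show "\<exists>u. in_kernel (A_rows C) (A_cols n) A_entry u \<and> v = lawrence_lift n u"
    by blast
qed (simp_all only: lawrence_lift_zero supp_lawrence_lift_subset_iff[OF in_kernel_vanishes in_kernel_vanishes]
    Gcd_lawrence_lift[OF in_kernel_vanishes] unit_entries_lawrence_lift[OF in_kernel_vanishes])

theorem proposition3p15:
  fixes n :: nat and C :: "nat set set"
  assumes "simplicial_complex n C"
  shows "unimodular_complex n C \<longleftrightarrow> unimodular_complex (n + 1) (lawrence n C)"
  using kernel_correspondence.unimodular_matrix_iff[OF lawrence_kernel_correspondence[OF assms]]
  unfolding unimodular_complex_def by simp

end
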